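(* Let $\mathscr{H}$ be the class of all (finite, simple) graphs $G$ on at least twelve vertices with $\gamma(G)=2$. Then $\mathscr{H}$ is recognizable: if $G\in\mathscr{H}$ and $H$ is any graph with $\mathscr{D}(H)=\mathscr{D}(G)$, then $H\in\mathscr{H}$.
   Context: All graphs are finite, simple and undirected. $\gamma(G)$ is the domination number of $G$ (the minimum size of a set $S\subseteq V(G)$ such that every vertex outside $S$ has a neighbour in $S$). For a vertex $v$, the card $G-v$ is the unlabeled graph obtained by deleting $v$ and its incident edges; the deck $\mathscr{D}(G)$ is the multiset of all cards of $G$ (up to isomorphism). A graph $H$ with $\mathscr{D}(H)=\mathscr{D}(G)$ is a reconstruction of $G$. A class $\mathcal{F}$ of graphs is recognizable if every reconstruction of every graph in $\mathcal{F}$ also lies in $\mathcal{F}$. *)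

theory Defs
  imports Main
begin

text \<open>A finite simple graph is a pair (V, E) of a finite vertex set and a set of
  2-element subsets of V (the edges).\<close>
type_synonym 'a graph = "'a set \<times> 'a set set"

definition simple_graph :: "'a graph \<Rightarrow> bool" where
  "simple_graph G \<longleftrightarrow> finite (fst G) \<and>
     (\<forall>e\<in>snd G. \<exists>u v. u \<noteq> v \<and> u \<in> fst G \<and> v \<in> fst G \<and> e = {u, v})"

definition dominating_set :: "'a graph \<Rightarrow> 'a set \<Rightarrow> bool" where
  "dominating_set G S \<longleftrightarrow> S \<subseteq> fst G \<and>
     (\<forall>v \<in> fst G - S. \<exists>u \<in> S. {u, v} \<in> snd G)"

definition domination_number :: "'a graph \<Rightarrow> nat" where
  "domination_number G = (LEAST k. \<exists>S. dominating_set G S \<and> card S = k)"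

definition delete_vertex :: "'a graph \<Rightarrow> 'a \<Rightarrow> 'a graph" where
  "delete_vertex G v = (fst G - {v}, {e \<in> snd G. v \<notin> e})"

definition graph_iso :: "'a graph \<Rightarrow> 'b graph \<Rightarrow> bool" where
  "graph_iso G H \<longleftrightarrow> (\<exists>f. bij_betw f (fst G) (fst H) \<and>
     (\<forall>u\<in>fst G. \<forall>w\<in>fst G. {u, w} \<in> snd G \<longleftrightarrow> {f u, f w} \<in> snd H))"

text \<open>Equality of decks (multisets of cards up to isomorphism): there is a bijection
  between the vertex sets matching each card of G with an isomorphic card of H.\<close>
definition same_deck :: "'a graph \<Rightarrow> 'b graph \<Rightarrow> bool" where
  "same_deck G H \<longleftrightarrow> (\<exists>g. bij_betw g (fst G) (fst H) \<and>
     (\<forall>v\<in>fst G. graph_iso (delete_vertex G v) (delete_vertex H (g v))))"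

definition in_class_H :: "'a graph \<Rightarrow> bool" where
  "in_class_H G \<longleftrightarrow> simple_graph G \<and> card (fst G) \<ge> 12 \<and> domination_number G = 2"

end

theory Submission
  imports Defs
begin

(* Let c(s, j) = undom_count F s j count the s-sets of vertices leaving exactly j vertices
   undominated. Counting pairs (w, S) with w \<notin> S shows that the sum of c(s, j) over the
   cards F - w is (n - s - j) c(s, j) + (j + 1) c(s, j + 1), so this quantity is determined
   by the deck. For two graphs with the same deck the differences d j of these counts
   therefore satisfy d j = (-1)^j (n - s choose j) d 0, while |d j| \<le> (n choose s). Hence
   d 0 = 0 as soon as (n choose s) < (n - s choose j). For n \<ge> 12 this applies to s = 1, j = 2
   and to s = 2, j = 3, so the deck decides whether there is a dominating vertex and whether
   there is a dominating pair, i.e. whether the domination number is 2. *)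

definition undominated :: "'a graph \<Rightarrow> 'a set \<Rightarrow> 'a set" where
  "undominated F S = {v \<in> fst F - S. \<forall>x\<in>S. {x, v} \<notin> snd F}"

definition undom_count :: "'a graph \<Rightarrow> nat \<Rightarrow> nat \<Rightarrow> nat" where
  "undom_count F s j = card {S. S \<subseteq> fst F \<and> card S = s \<and> card (undominated F S) = j}"

lemma undominated_subset: "undominated F S \<subseteq> fst F - S"
  by (auto simp: undominated_def)

lemma undominated_delete_vertex:
  "w \<notin> S \<Longrightarrow> undominated (delete_vertex F w) S = undominated F S - {w}"
  by (auto simp: undominated_def delete_vertex_def)

lemma dominating_set_iff_undominated_empty:
  "dominating_set F S \<longleftrightarrow> S \<subseteq> fst F \<and> undominated F S = {}"
  by (auto simp: dominating_set_def undominated_def)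

lemma undom_count_le:
  assumes "finite (fst F)"
  shows "undom_count F s j \<le> card (fst F) choose s"
  unfolding undom_count_def n_subsets[OF assms, symmetric]
  by (rule card_mono) (use assms in auto)

lemma undom_count_0_pos_iff:
  assumes "finite (fst F)"
  shows "0 < undom_count F s 0 \<longleftrightarrow> (\<exists>S. dominating_set F S \<and> card S = s)"
proof -
  have "finite {S. S \<subseteq> fst F \<and> card S = s \<and> card (undominated F S) = 0}"
    using assms by simp
  moreover have "finite (undominated F S)" for S
    using undominated_subset assms by (meson finite_Diff finite_subset)
  ultimately show ?thesis
    by (auto simp: undom_count_def card_gt_0_iff dominating_set_iff_undominated_empty)
qed

lemma domination_number_eq_2_iff:
  assumes "finite (fst F)" "fst F \<noteq> {}"
  shows "domination_number F = 2 \<longleftrightarrow> undom_count F 1 0 = 0 \<and> undom_count F 2 0 \<noteq> 0"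
proof -
  let ?P = "\<lambda>k. \<exists>S. dominating_set F S \<and> card S = k"
  have P_iff: "?P k \<longleftrightarrow> undom_count F k 0 \<noteq> 0" for k
    using undom_count_0_pos_iff[OF assms(1)] by auto
  have "?P (card (fst F))"
    by (auto simp: dominating_set_def)
  moreover have "\<not> ?P 0"
    using assms by (auto simp: dominating_set_def finite_subset)
  ultimately have "Least ?P = 2 \<longleftrightarrow> ?P 2 \<and> \<not> ?P 1"
  proof (intro iffI)
    assume "Least ?P = 2"
    then show "?P 2 \<and> \<not> ?P 1"
      using LeastI[of ?P, OF \<open>?P (card (fst F))\<close>] not_less_Least[of 1 ?P] by auto
  next
    assume P2: "?P 2 \<and> \<not> ?P 1"
    show "Least ?P = 2"
    proof (rule Least_equality)
      show "?P 2" using P2 by blast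
    next
      fix k assume "?P k"
      then have "k \<noteq> 0" "k \<noteq> 1"
        using P2 \<open>\<not> ?P 0\<close> by auto
      then show "2 \<le> k" by arith
    qed
  qed
  then show ?thesis
    by (auto simp: domination_number_def P_iff)
qed

lemma card_filter_card_Diff_singleton:
  assumes "finite A" "U \<subseteq> A"
  shows "card {w \<in> A. card (U - {w}) = j} =
    (if card U = j then card A - j else 0) + (if card U = Suc j then Suc j else 0)"
proof -
  have "finite U" using assms finite_subset by blast
  have "{w \<in> A. card (U - {w}) = j} = {w \<in> A - U. card U = j} \<union> {w \<in> U. card U - 1 = j}"
    using assms(2) \<open>finite U\<close> by (auto simp: card_Diff_singleton_if)
  then have "card {w \<in> A. card (U - {w}) = j} =
      card {w \<in> A - U. card U = j} + card {w \<in> U. card U - 1 = j}"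
    using assms(1) \<open>finite U\<close> by (simp add: card_Un_disjoint disjoint_iff)
  moreover have "card {w \<in> A - U. card U = j} = (if card U = j then card A - j else 0)"
    using assms \<open>finite U\<close> by (simp add: card_Diff_subset flip: set_diff_eq)
  moreover have "card {w \<in> U. card U - 1 = j} = (if card U = Suc j then Suc j else 0)"
    using \<open>finite U\<close> by (cases "card U") auto
  ultimately show ?thesis by simp
qed

lemma sum_undom_count_delete_vertex:
  assumes "finite (fst F)"
  shows "(\<Sum>w\<in>fst F. undom_count (delete_vertex F w) s j) =
    (card (fst F) - s - j) * undom_count F s j + Suc j * undom_count F s (Suc j)"
proof -
  define V where "V = fst F"
  define Ss where "Ss = {S. S \<subseteq> V \<and> card S = s}"
  let ?R = "\<lambda>w S. w \<notin> S \<and> card (undominated F S - {w}) = j"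
  have "finite V" "finite Ss"
    using assms by (simp_all add: V_def Ss_def)
  have count_on_card: "undom_count (delete_vertex F w) s j = card {S \<in> Ss. ?R w S}" for w
  proof -
    have "fst (delete_vertex F w) = V - {w}"
      by (simp add: delete_vertex_def V_def)
    then show ?thesis
      unfolding undom_count_def
      by (intro arg_cong[where f = card]) (auto simp: undominated_delete_vertex Ss_def subset_Diff_insert)
  qed
  have per_set: "card {w \<in> V. ?R w S} =
      (if card (undominated F S) = j then card V - s - j else 0) +
      (if card (undominated F S) = Suc j then Suc j else 0)" if "S \<in> Ss" for S
  proof -
    have "card (V - S) = card V - s"
      using that \<open>finite V\<close> by (auto simp: Ss_def card_Diff_subset finite_subset)
    moreover have "{w \<in> V. ?R w S} = {w \<in> V - S. card (undominated F S - {w}) = j}"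
      by auto
    ultimately show ?thesis
      using card_filter_card_Diff_singleton[of "V - S" "undominated F S" j] \<open>finite V\<close>
        undominated_subset[of F S] by (simp add: V_def)
  qed
  have "(\<Sum>w\<in>V. undom_count (delete_vertex F w) s j) = (\<Sum>w\<in>V. card {S \<in> Ss. ?R w S})"
    by (simp add: count_on_card)
  also have "\<dots> = (\<Sum>S\<in>Ss. card {w \<in> V. ?R w S})"
    using sum.swap_restrict[OF \<open>finite V\<close> \<open>finite Ss\<close>, of "\<lambda>_ _. 1::nat" ?R] by simp
  also have "\<dots> = (card V - s - j) * card {S \<in> Ss. card (undominated F S) = j} +
      Suc j * card {S \<in> Ss. card (undominated F S) = Suc j}"
    using \<open>finite Ss\<close> by (simp add: per_set sum.distrib flip: sum.inter_filter)
  finally show ?thesis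
    by (simp add: V_def Ss_def undom_count_def)
qed

lemma undominated_image:
  assumes f: "bij_betw f (fst F) (fst F')"
    and adj: "\<forall>u\<in>fst F. \<forall>w\<in>fst F. {u, w} \<in> snd F \<longleftrightarrow> {f u, f w} \<in> snd F'"
    and "S \<subseteq> fst F"
  shows "undominated F' (f ` S) = f ` undominated F S"
proof -
  have iff: "f v \<in> undominated F' (f ` S) \<longleftrightarrow> v \<in> undominated F S" if "v \<in> fst F" for v
  proof -
    have "f v \<in> fst F'"
      using f that by (rule bij_betw_apply)
    moreover have "f v \<in> f ` S \<longleftrightarrow> v \<in> S"
      using inj_on_image_mem_iff[OF bij_betw_imp_inj_on[OF f] that \<open>S \<subseteq> fst F\<close>] .
    moreover have "{f x, f v} \<in> snd F' \<longleftrightarrow> {x, v} \<in> snd F" if "x \<in> S" for x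
      using adj \<open>v \<in> fst F\<close> \<open>S \<subseteq> fst F\<close> that by (meson subsetD)
    ultimately show ?thesis
      using that by (simp add: undominated_def)
  qed
  show ?thesis
  proof (intro equalityI subsetI)
    fix y assume y: "y \<in> undominated F' (f ` S)"
    then have "y \<in> f ` fst F"
      using undominated_subset[of F' "f ` S"] bij_betw_imp_surj_on[OF f] by auto
    then obtain v where "v \<in> fst F" "y = f v" by blast
    with y iff show "y \<in> f ` undominated F S" by auto
  next
    fix y assume "y \<in> f ` undominated F S"
    then obtain v where "v \<in> undominated F S" "y = f v" by blast
    moreover have "v \<in> fst F"
      using \<open>v \<in> undominated F S\<close> undominated_subset[of F S] by blast
    ultimately show "y \<in> undominated F' (f ` S)"
      using iff by simp
  qed
qed

lemma undom_count_iso: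
  assumes "graph_iso F F'"
  shows "undom_count F s j = undom_count F' s j"
proof -
  obtain f where f: "bij_betw f (fst F) (fst F')"
    and adj: "\<forall>u\<in>fst F. \<forall>w\<in>fst F. {u, w} \<in> snd F \<longleftrightarrow> {f u, f w} \<in> snd F'"
    using assms by (auto simp: graph_iso_def)
  have card_image_f: "card (f ` S) = card S" if "S \<subseteq> fst F" for S
    using that bij_betw_imp_inj_on[OF f] by (meson card_image inj_on_subset)
  have "bij_betw (image f)
      {S \<in> Pow (fst F). card S = s \<and> card (undominated F S) = j}
      {S \<in> Pow (fst F'). card S = s \<and> card (undominated F' S) = j}"
  proof (rule bij_betw_Collect[OF bij_betw_Pow[OF f]])
    fix S assume "S \<in> Pow (fst F)"
    moreover have "undominated F S \<subseteq> fst F"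
      using undominated_subset[of F S] by blast
    ultimately show "card (f ` S) = s \<and> card (undominated F' (f ` S)) = j \<longleftrightarrow>
        card S = s \<and> card (undominated F S) = j"
      using card_image_f[of S] card_image_f[of "undominated F S"]
      by (simp add: undominated_image[OF f adj])
  qed
  then show ?thesis
    unfolding undom_count_def by (simp add: bij_betw_same_card)
qed

lemma same_deck_sum_undom_count:
  assumes "same_deck H G"
  shows "(\<Sum>w\<in>fst H. undom_count (delete_vertex H w) s j) =
    (\<Sum>v\<in>fst G. undom_count (delete_vertex G v) s j)"
proof -
  obtain g where g: "bij_betw g (fst H) (fst G)"
    and cards: "\<forall>v\<in>fst H. graph_iso (delete_vertex H v) (delete_vertex G (g v))"
    using assms by (auto simp: same_deck_def)
  have "(\<Sum>w\<in>fst H. undom_count (delete_vertex H w) s j) =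
      (\<Sum>w\<in>fst H. undom_count (delete_vertex G (g w)) s j)"
    using cards undom_count_iso by (intro sum.cong) blast+
  also have "\<dots> = (\<Sum>v\<in>fst G. undom_count (delete_vertex G v) s j)"
    using g by (rule sum.reindex_bij_betw)
  finally show ?thesis .
qed

lemma alternating_binomial_if_recurrence:
  fixes d :: "nat \<Rightarrow> int"
  assumes rec: "\<And>i. int (m - i) * d i + int (Suc i) * d (Suc i) = 0"
  shows "d j = (-1) ^ j * int (m choose j) * d 0"
proof (induction j)
  case 0
  show ?case by simp
next
  case (Suc j)
  have "(m - j) * (m choose j) = Suc j * (m choose Suc j)"
    by (metis binomial_absorb_comp times_binomial_minus1_eq zero_less_Suc diff_Suc_1)
  then have absorb: "int (m - j) * int (m choose j) = int (Suc j) * int (m choose Suc j)"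
    by (simp only: of_nat_mult [symmetric])
  have "int (Suc j) * d (Suc j) = - (int (m - j) * d j)"
    using rec[of j] by linarith
  also have "\<dots> = (-1) ^ Suc j * (int (m - j) * int (m choose j)) * d 0"
    using Suc.IH by (simp add: algebra_simps)
  also have "\<dots> = int (Suc j) * ((-1) ^ Suc j * int (m choose Suc j) * d 0)"
    unfolding absorb by (simp add: algebra_simps)
  finally show ?case
    by (metis mult_left_cancel of_nat_eq_0_iff Zero_not_Suc)
qed

lemma same_deck_undom_count_0_eq:
  assumes deck: "same_deck H G" and "finite (fst G)"
    and binomial_gap: "card (fst G) choose s < (card (fst G) - s) choose j"
  shows "undom_count H s 0 = undom_count G s 0"
proof -
  define n where "n = card (fst G)"
  obtain g where "bij_betw g (fst H) (fst G)"
    using deck by (auto simp: same_deck_def)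
  then have "finite (fst H)" "card (fst H) = n"
    using \<open>finite (fst G)\<close> by (auto simp: n_def bij_betw_finite bij_betw_same_card)
  define d where "d i = int (undom_count H s i) - int (undom_count G s i)" for i
  have "(n - s - i) * undom_count H s i + Suc i * undom_count H s (Suc i) =
      (n - s - i) * undom_count G s i + Suc i * undom_count G s (Suc i)" for i
    using sum_undom_count_delete_vertex[OF \<open>finite (fst H)\<close>, of s i]
      sum_undom_count_delete_vertex[OF \<open>finite (fst G)\<close>, of s i]
      same_deck_sum_undom_count[OF deck, of s i] \<open>card (fst H) = n\<close>
    by (simp add: n_def)
  then have "int (n - s - i) * d i + int (Suc i) * d (Suc i) = 0" for i
    unfolding d_def by (simp only: algebra_simps flip: of_nat_mult of_nat_add)
  then have d_j: "d j = (-1) ^ j * int ((n - s) choose j) * d 0"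
    by (rule alternating_binomial_if_recurrence)
  have "\<bar>d j\<bar> \<le> int (n choose s)"
    using undom_count_le[OF \<open>finite (fst H)\<close>, of s j] undom_count_le[OF \<open>finite (fst G)\<close>, of s j]
      \<open>card (fst H) = n\<close> by (simp add: d_def n_def)
  moreover have "\<bar>d j\<bar> = int ((n - s) choose j) * \<bar>d 0\<bar>"
    unfolding d_j by (simp add: abs_mult)
  ultimately have "int ((n - s) choose j) * \<bar>d 0\<bar> < int ((n - s) choose j)"
    using binomial_gap by (simp add: n_def)
  then have "\<bar>d 0\<bar> < 1"
    by (simp add: mult_less_cancel_left2)
  then have "d 0 = 0"
    by simp
  then show ?thesis
    by (simp add: d_def)
qed

lemma two_times_choose_two: "2 * (m choose 2) = m * (m - 1)"
  using times_binomial_minus1_eq[of 2 m] by simp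

lemma six_times_choose_three: "6 * (m choose 3) = m * (m - 1) * (m - 2)"
proof -
  have "3 * (m choose 3) = m * ((m - 1) choose 2)"
    using times_binomial_minus1_eq[of 3 m] by simp
  moreover have "2 * ((m - 1) choose 2) = (m - 1) * (m - 1 - 1)"
    using times_binomial_minus1_eq[of 2 "m - 1"] by simp
  ultimately show ?thesis
    by (metis diff_diff_left mult.assoc mult.left_commute num_double numeral_times_numeral one_add_one)
qed

lemma less_choose_two: "5 \<le> n \<Longrightarrow> n < (n - 1) choose 2"
proof -
  assume "5 \<le> n"
  then obtain k where n: "n = k + 5"
    using le_Suc_ex by (metis add.commute)
  have "2 * n < (n - 1) * (n - 1 - 1)"
    unfolding n by (simp add: algebra_simps)
  then show ?thesis
    using two_times_choose_two[of "n - 1"] by simp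
qed

lemma choose_two_less_choose_three: "10 \<le> n \<Longrightarrow> n choose 2 < (n - 2) choose 3"
proof -
  assume "10 \<le> n"
  then obtain k where n: "n = k + 10"
    using le_Suc_ex by (metis add.commute)
  have "3 * (n * (n - 1)) < (n - 2) * (n - 2 - 1) * (n - 2 - 2)"
    unfolding n by (simp add: algebra_simps)
  then show ?thesis
    using two_times_choose_two[of n] six_times_choose_three[of "n - 2"] by simp
qed

theorem theorem12:
  fixes G :: "'a graph" and H :: "'b graph"
  assumes "in_class_H G"
    and "simple_graph H"
    and "same_deck H G"
  shows "in_class_H H"
proof -
  have "finite (fst G)" "12 \<le> card (fst G)" "domination_number G = 2"
    using assms(1) by (auto simp: in_class_H_def simple_graph_def)
  have "finite (fst H)"
    using assms(2) by (simp add: simple_graph_def)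
  have same_card: "card (fst H) = card (fst G)"
    using assms(3) by (auto simp: same_deck_def bij_betw_same_card)
  have "undom_count H 1 0 = undom_count G 1 0"
    using \<open>12 \<le> card (fst G)\<close> less_choose_two[of "card (fst G)"]
    by (intro same_deck_undom_count_0_eq[OF assms(3) \<open>finite (fst G)\<close>, of 1 2]) simp
  moreover have "undom_count H 2 0 = undom_count G 2 0"
    using \<open>12 \<le> card (fst G)\<close> choose_two_less_choose_three[of "card (fst G)"]
    by (intro same_deck_undom_count_0_eq[OF assms(3) \<open>finite (fst G)\<close>, of 2 3]) simp
  moreover have "fst G \<noteq> {}" "fst H \<noteq> {}"
    using \<open>12 \<le> card (fst G)\<close> same_card by auto
  ultimately have "domination_number H = 2"
    using \<open>domination_number G = 2\<close> domination_number_eq_2_iff[OF \<open>finite (fst G)\<close>]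
      domination_number_eq_2_iff[OF \<open>finite (fst H)\<close>] by simp
  then show ?thesis
    using assms(2) same_card \<open>12 \<le> card (fst G)\<close> by (simp add: in_class_H_def)
qed

end
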